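(* Let $B$ be an $(n,n-1)$-blocker for a convex $n$-gon with vertices $0,\dots,n-1$ (indices mod $n$). If the ear-cover $(i-1,i+1)$ does not belong to $B$, then $\deg_B(i)\le 2$.
   Context: An edge $(i,j)$ is the segment between vertices $i,j$; boundary edges are $(i,i+1)$, diagonals are the other edges. Two edges cross if they share an interior point. A triangulation is a maximal set of pairwise non-crossing diagonals. A blocker is a set $B$ of diagonals having a diagonal in common with every triangulation; it is saturated if for every $e\in B$, $B\setminus\{e\}$ is not a blocker. An $(n,k)$-blocker is a saturated blocker of size $k$ for a convex $n$-gon. The diagonal $(i-1,i+1)$ is the ear-cover covering $i$. $\deg_B(i)$ is the number of edges of $B$ incident to $i$. *)

theory Defs
  imports Main
begin

text \<open>Convex n-gon with vertices 0,...,n-1 (indices mod n). An edge is the unordered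
pair of its endpoints, represented as a two-element set of naturals.\<close>

definition diagonal :: "nat \<Rightarrow> nat set \<Rightarrow> bool" where
  "diagonal n e \<longleftrightarrow> (\<exists>a b. e = {a, b} \<and> a < n \<and> b < n \<and> a \<noteq> b
      \<and> b \<noteq> (a + 1) mod n \<and> a \<noteq> (b + 1) mod n)"

text \<open>For vertices in convex position, two edges with four distinct endpoints
share an interior point iff their endpoints interleave in the cyclic order.\<close>
definition interleave :: "nat set \<Rightarrow> nat set \<Rightarrow> bool" where
  "interleave e f \<longleftrightarrow> (\<exists>a b c d. e = {a, b} \<and> f = {c, d} \<and> a < c \<and> c < b \<and> b < d)"

definition crosses :: "nat set \<Rightarrow> nat set \<Rightarrow> bool" where
  "crosses e f \<longleftrightarrow> interleave e f \<or> interleave f e"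

definition triangulation :: "nat \<Rightarrow> nat set set \<Rightarrow> bool" where
  "triangulation n T \<longleftrightarrow>
     (\<forall>e\<in>T. diagonal n e) \<and>
     (\<forall>e\<in>T. \<forall>f\<in>T. \<not> crosses e f) \<and>
     (\<forall>e. diagonal n e \<and> e \<notin> T \<longrightarrow> (\<exists>f\<in>T. crosses e f))"

definition blocker :: "nat \<Rightarrow> nat set set \<Rightarrow> bool" where
  "blocker n B \<longleftrightarrow> (\<forall>e\<in>B. diagonal n e) \<and>
     (\<forall>T. triangulation n T \<longrightarrow> B \<inter> T \<noteq> {})"

definition saturated_blocker :: "nat \<Rightarrow> nat set set \<Rightarrow> bool" where
  "saturated_blocker n B \<longleftrightarrow> blocker n B \<and> (\<forall>e\<in>B. \<not> blocker n (B - {e}))"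

definition nk_blocker :: "nat \<Rightarrow> nat \<Rightarrow> nat set set \<Rightarrow> bool" where
  "nk_blocker n k B \<longleftrightarrow> saturated_blocker n B \<and> finite B \<and> card B = k"

definition ear_cover :: "nat \<Rightarrow> nat \<Rightarrow> nat set" where
  "ear_cover n i = {(i + n - 1) mod n, (i + 1) mod n}"

definition deg :: "nat set set \<Rightarrow> nat \<Rightarrow> nat" where
  "deg B i = card {e \<in> B. i \<in> e}"

end

theory Submission
  imports Defs
begin

(* A convex polygon is modelled by a finite set S of naturals, its vertices in increasing
   cyclic order. If the ear {prev v, next v} of a vertex v is not in a blocker B of S, then the
   diagonals of B avoiding v form a blocker of S - {v}: a triangulation of S - {v} avoiding them
   extends by the ear of v to a triangulation of S avoiding B. If |B| <= |S| - 3, some vertex met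
   by B has its ear outside B (otherwise the vertices met by B are closed under next, so all ears
   lie in B, and the |S| - 2 ears of the non-extreme vertices are distinct). Deleting that vertex
   and inducting on |S| shows that every blocker of S has at least |S| - 2 diagonals. For the
   n-gon, deleting vertex i leaves the blocker of the (n-1)-gon formed by the n - 1 - deg(i)
   diagonals of B avoiding i, so n - 1 - deg(i) >= n - 3. *)

definition polygon_diagonal :: "nat set \<Rightarrow> nat set \<Rightarrow> bool" where
  "polygon_diagonal S e \<longleftrightarrow> (\<exists>a b. e = {a, b} \<and> a \<in> S \<and> b \<in> S \<and> a < b
      \<and> (\<exists>c\<in>S. a < c \<and> c < b) \<and> (\<exists>c\<in>S. c < a \<or> b < c))"

definition polygon_triangulation :: "nat set \<Rightarrow> nat set set \<Rightarrow> bool" where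
  "polygon_triangulation S T \<longleftrightarrow>
     (\<forall>e\<in>T. polygon_diagonal S e) \<and>
     (\<forall>e\<in>T. \<forall>f\<in>T. \<not> crosses e f) \<and>
     (\<forall>e. polygon_diagonal S e \<and> e \<notin> T \<longrightarrow> (\<exists>f\<in>T. crosses e f))"

definition polygon_blocker :: "nat set \<Rightarrow> nat set set \<Rightarrow> bool" where
  "polygon_blocker S B \<longleftrightarrow> (\<forall>e\<in>B. polygon_diagonal S e) \<and>
     (\<forall>T. polygon_triangulation S T \<longrightarrow> B \<inter> T \<noteq> {})"

definition prev_vertex :: "nat set \<Rightarrow> nat \<Rightarrow> nat" where
  "prev_vertex S v = (if \<exists>x\<in>S. x < v then Max {x\<in>S. x < v} else Max S)"

definition next_vertex :: "nat set \<Rightarrow> nat \<Rightarrow> nat" where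
  "next_vertex S v = (if \<exists>x\<in>S. v < x then Min {x\<in>S. v < x} else Min S)"

definition polygon_ear :: "nat set \<Rightarrow> nat \<Rightarrow> nat set" where
  "polygon_ear S v = {prev_vertex S v, next_vertex S v}"

lemma ex_not_in_if_card_less:
  assumes "finite A" "card A < card S"
  shows "\<exists>x\<in>S. x \<notin> A"
  using assms card_mono[OF assms(1), of S] by (meson not_le subsetI)

lemma interleave_iff:
  "interleave {a, b} {c, d} \<longleftrightarrow>
     (a < c \<and> c < b \<and> b < d) \<or> (b < c \<and> c < a \<and> a < d) \<or>
     (a < d \<and> d < b \<and> b < c) \<or> (b < d \<and> d < a \<and> a < c)"
  for a b c d :: nat
  unfolding interleave_def doubleton_eq_iff by (rule iffI; elim disjE exE conjE) blast+

lemma crosses_iff: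
  "crosses {a, b} {c, d} \<longleftrightarrow>
     (a < c \<and> c < b \<and> b < d) \<or> (b < c \<and> c < a \<and> a < d) \<or>
     (a < d \<and> d < b \<and> b < c) \<or> (b < d \<and> d < a \<and> a < c) \<or>
     (c < a \<and> a < d \<and> d < b) \<or> (d < a \<and> a < c \<and> c < b) \<or>
     (c < b \<and> b < d \<and> d < a) \<or> (d < b \<and> b < c \<and> c < a)"
  for a b c d :: nat
  unfolding crosses_def interleave_iff by auto

lemma crosses_commute: "crosses e f \<longleftrightarrow> crosses f e"
  unfolding crosses_def by blast

lemma not_crosses_self: "\<not> crosses e e"
  unfolding crosses_def interleave_def by (auto simp: doubleton_eq_iff)

lemma prev_vertex_less:
  assumes "finite S" "x \<in> S" "x < v"
  shows "prev_vertex S v \<in> S \<and> x \<le> prev_vertex S v \<and> prev_vertex S v < v"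
proof -
  have "finite {x\<in>S. x < v}" "x \<in> {x\<in>S. x < v}"
    using assms by auto
  moreover have "prev_vertex S v = Max {x\<in>S. x < v}"
    using assms unfolding prev_vertex_def by auto
  ultimately show ?thesis
    using Max_in[of "{x\<in>S. x < v}"] Max_ge[of "{x\<in>S. x < v}" x] by fastforce
qed

lemma prev_vertex_wrap:
  assumes "finite S" "x \<in> S" "\<forall>y\<in>S. v \<le> y"
  shows "prev_vertex S v \<in> S \<and> x \<le> prev_vertex S v"
proof -
  have "prev_vertex S v = Max S"
    using assms(3) unfolding prev_vertex_def by (auto simp: not_less)
  then show ?thesis
    using Max_in[OF assms(1)] Max_ge[OF assms(1,2)] assms(2) by auto
qed

lemma next_vertex_greater:
  assumes "finite S" "x \<in> S" "v < x"
  shows "next_vertex S v \<in> S \<and> next_vertex S v \<le> x \<and> v < next_vertex S v"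
proof -
  have "finite {x\<in>S. v < x}" "x \<in> {x\<in>S. v < x}"
    using assms by auto
  moreover have "next_vertex S v = Min {x\<in>S. v < x}"
    using assms unfolding next_vertex_def by auto
  ultimately show ?thesis
    using Min_in[of "{x\<in>S. v < x}"] Min_le[of "{x\<in>S. v < x}" x] by fastforce
qed

lemma next_vertex_wrap:
  assumes "finite S" "x \<in> S" "\<forall>y\<in>S. y \<le> v"
  shows "next_vertex S v \<in> S \<and> next_vertex S v \<le> x"
proof -
  have "next_vertex S v = Min S"
    using assms(3) unfolding next_vertex_def by (auto simp: not_less)
  then show ?thesis
    using Min_in[OF assms(1)] Min_le[OF assms(1,2)] assms(2) by auto
qed

(* The chord {a, b} cuts v off from the other vertices; the outer case arises when v is
   Min S or Max S and its ear wraps around. *)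
lemma polygon_ear_cases:
  assumes "finite S" "v \<in> S" "2 \<le> card S"
  obtains (inner) a b where "polygon_ear S v = {a, b}" "a \<in> S" "b \<in> S" "a < v" "v < b"
      "\<And>x. x \<in> S \<Longrightarrow> x \<noteq> v \<Longrightarrow> x \<le> a \<or> b \<le> x"
    | (outer) a b where "polygon_ear S v = {a, b}" "a \<in> S" "b \<in> S" "v < a \<or> b < v"
      "\<And>x. x \<in> S \<Longrightarrow> x \<noteq> v \<Longrightarrow> a \<le> x \<and> x \<le> b"
proof -
  let ?p = "prev_vertex S v" and ?q = "next_vertex S v"
  obtain y where y: "y \<in> S" "y \<noteq> v"
    using ex_not_in_if_card_less[of "{v}" S] assms(3) by auto
  consider "\<exists>x\<in>S. x < v" "\<exists>x\<in>S. v < x" | "\<forall>x\<in>S. v \<le> x" | "\<forall>x\<in>S. x \<le> v"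
    using not_le by blast
  then show thesis
  proof cases
    case 1
    then obtain x z where "x \<in> S" "x < v" "z \<in> S" "v < z" by blast
    then have "?p \<in> S" "?p < v" "\<And>x. x \<in> S \<Longrightarrow> x < v \<Longrightarrow> x \<le> ?p"
      and "?q \<in> S" "v < ?q" "\<And>x. x \<in> S \<Longrightarrow> v < x \<Longrightarrow> ?q \<le> x"
      using prev_vertex_less[OF assms(1)] next_vertex_greater[OF assms(1)] by blast+
    then show thesis
      by (intro inner[of ?p ?q]) (auto simp: polygon_ear_def, meson linorder_neqE_nat)
  next
    case 2
    then have "v < y" using y by (simp add: le_neq_trans)
    then have "?q \<in> S" "v < ?q" "\<And>x. x \<in> S \<Longrightarrow> v < x \<Longrightarrow> ?q \<le> x"
      using next_vertex_greater[OF assms(1) y(1)] next_vertex_greater[OF assms(1)] by blast+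
    moreover have "?p \<in> S" "\<And>x. x \<in> S \<Longrightarrow> x \<le> ?p"
      using prev_vertex_wrap[OF assms(1) _ 2] y(1) by blast+
    ultimately show thesis
      using 2 by (intro outer[of ?q ?p]) (auto simp: polygon_ear_def le_neq_trans)
  next
    case 3
    then have "y < v" using y by (simp add: order.not_eq_order_implies_strict)
    then have "?p \<in> S" "?p < v" "\<And>x. x \<in> S \<Longrightarrow> x < v \<Longrightarrow> x \<le> ?p"
      using prev_vertex_less[OF assms(1) y(1)] prev_vertex_less[OF assms(1)] by blast+
    moreover have "?q \<in> S" "\<And>x. x \<in> S \<Longrightarrow> ?q \<le> x"
      using next_vertex_wrap[OF assms(1) _ 3] y(1) by blast+
    ultimately show thesis
      using 3 by (intro outer[of ?q ?p]) (auto simp: polygon_ear_def order.not_eq_order_implies_strict)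
  qed
qed

lemma card_ge_4_if_polygon_diagonal:
  assumes "finite S" "polygon_diagonal S e"
  shows "4 \<le> card S"
proof -
  obtain a b c w where "a \<in> S" "b \<in> S" "c \<in> S" "w \<in> S" "a < c" "c < b" "w < a \<or> b < w"
    using assms(2) unfolding polygon_diagonal_def by blast
  then have "card {a, b, c, w} = 4" "{a, b, c, w} \<subseteq> S" by auto
  then show ?thesis using card_mono[OF assms(1)] by metis
qed

lemma polygon_diagonal_subset: "polygon_diagonal S e \<Longrightarrow> e \<subseteq> S"
  unfolding polygon_diagonal_def by blast

lemma polygon_diagonal_mono: "polygon_diagonal S' e \<Longrightarrow> S' \<subseteq> S \<Longrightarrow> polygon_diagonal S e"
  unfolding polygon_diagonal_def by blast

lemma polygon_diagonal_lessD:
  assumes "polygon_diagonal S {x, y}" "x < y"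
  shows "x \<in> S" "y \<in> S" "\<exists>c\<in>S. x < c \<and> c < y" "\<exists>c\<in>S. c < x \<or> y < c"
  using assms unfolding polygon_diagonal_def doubleton_eq_iff by auto

lemma polygon_diagonal_ear:
  assumes "finite S" "v \<in> S" "4 \<le> card S"
  shows "polygon_diagonal S (polygon_ear S v)"
proof -
  have "2 \<le> card S" using assms(3) by simp
  have "card (insert v (polygon_ear S v)) \<le> 3"
    unfolding polygon_ear_def by (intro card_insert_le_m1) (auto intro: card_insert_le_m1)
  then obtain x where x: "x \<in> S" "x \<noteq> v" "x \<notin> polygon_ear S v"
    using ex_not_in_if_card_less[of "insert v (polygon_ear S v)" S] assms(3)
    by (auto simp: polygon_ear_def)
  show ?thesis
  proof (cases rule: polygon_ear_cases[OF assms(1,2) \<open>2 \<le> card S\<close>, case_names inner outer])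
    case (inner a b)
    have "x < a \<or> b < x"
      using inner(1,6) x by fastforce
    moreover have "a < b"
      using inner(4,5) by (rule less_trans)
    ultimately show ?thesis
      unfolding polygon_diagonal_def inner(1) using inner(2-5) assms(2) x(1) by blast
  next
    case (outer a b)
    have "a < x" "x < b"
      using outer(1,5) x by fastforce+
    then show ?thesis
      unfolding polygon_diagonal_def outer(1) using outer(2-4) assms(2) x(1) by fastforce
  qed
qed

lemma polygon_ear_not_crosses:
  assumes "finite S" "v \<in> S" "2 \<le> card S" "c \<in> S - {v}" "d \<in> S - {v}"
  shows "\<not> crosses (polygon_ear S v) {c, d}"
proof (cases rule: polygon_ear_cases[OF assms(1-3), case_names inner outer])
  case (inner a b)
  have "c \<le> a \<or> b \<le> c" "d \<le> a \<or> b \<le> d"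
    using inner(6) assms(4,5) by auto
  then show ?thesis
    unfolding inner(1) crosses_iff using inner(4,5) by auto
next
  case (outer a b)
  have "a \<le> c \<and> c \<le> b" "a \<le> d \<and> d \<le> b"
    using outer(5) assms(4,5) by auto
  then show ?thesis
    unfolding outer(1) crosses_iff by auto
qed

lemma polygon_diagonal_doubletonD:
  assumes "polygon_diagonal S {x, y}"
  obtains c w where "x \<in> S" "y \<in> S" "c \<in> S" "min x y < c" "c < max x y"
    "w \<in> S" "w < min x y \<or> max x y < w"
proof (cases x y rule: linorder_cases)
  case less
  then show thesis
    using polygon_diagonal_lessD[OF assms] that by (auto simp: min_def max_def)
next
  case equal
  then show thesis
    using assms unfolding polygon_diagonal_def by auto
next
  case greater
  then show thesis
    using polygon_diagonal_lessD[OF assms[unfolded insert_commute[of x y]]] that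
    by (auto simp: min_def max_def)
qed

lemma not_polygon_diagonal_to_ear:
  assumes "finite S" "v \<in> S" "y \<in> polygon_ear S v"
  shows "\<not> polygon_diagonal S {v, y}"
proof
  assume diag: "polygon_diagonal S {v, y}"
  then obtain c w where c: "c \<in> S" "min v y < c" "c < max v y"
    and w: "w \<in> S" "w < min v y \<or> max v y < w"
    by (rule polygon_diagonal_doubletonD)
  have "c \<noteq> v" "w \<noteq> v"
    using c w by auto
  have "2 \<le> card S"
    using card_ge_4_if_polygon_diagonal[OF assms(1) diag] by simp
  then show False
  proof (cases rule: polygon_ear_cases[OF assms(1,2) \<open>2 \<le> card S\<close>, case_names inner outer])
    case (inner a b)
    have "c \<le> a \<or> b \<le> c"
      using inner(6) c(1) \<open>c \<noteq> v\<close> by blast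
    moreover have "y = a \<or> y = b"
      using assms(3) inner(1) by blast
    ultimately show False
      using c(2,3) inner(4,5) by (auto simp: min_def max_def)
  next
    case (outer a b)
    have "a \<le> c \<and> c \<le> b" "a \<le> w \<and> w \<le> b"
      using outer(5) c(1) w(1) \<open>c \<noteq> v\<close> \<open>w \<noteq> v\<close> by blast+
    moreover have "y = a \<or> y = b"
      using assms(3) outer(1) by blast
    ultimately show False
      using c(2,3) w(2) outer(4) by (auto simp: min_def max_def)
  qed
qed

lemma polygon_diagonal_at_vertex_crosses_ear:
  assumes "finite S" "v \<in> S" "polygon_diagonal S f" "v \<in> f"
  shows "crosses f (polygon_ear S v)"
proof -
  obtain x where f: "f = {v, x}"
    using assms(3,4) unfolding polygon_diagonal_def by auto
  have x: "x \<in> S" "x \<noteq> v" "x \<notin> polygon_ear S v"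
    using polygon_diagonal_subset[OF assms(3)] not_polygon_diagonal_to_ear[OF assms(1,2)] assms(3)
    unfolding f polygon_diagonal_def by (auto simp: doubleton_eq_iff)
  have "2 \<le> card S"
    using card_ge_4_if_polygon_diagonal[OF assms(1,3)] by simp
  then show ?thesis
  proof (cases rule: polygon_ear_cases[OF assms(1,2) \<open>2 \<le> card S\<close>, case_names inner outer])
    case (inner a b)
    have "x < a \<or> b < x"
      using inner(1,6) x by fastforce
    then show ?thesis
      unfolding f inner(1) crosses_iff using inner(4,5) by auto
  next
    case (outer a b)
    have "a < x" "x < b"
      using outer(1,5) x by fastforce+
    then show ?thesis
      unfolding f outer(1) crosses_iff using outer(4) by auto
  qed
qed

lemma polygon_diagonal_delete_vertex:
  assumes "finite S" "v \<in> S" "polygon_diagonal S e" "v \<notin> e" "e \<noteq> polygon_ear S v"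
  shows "polygon_diagonal (S - {v}) e"
proof -
  obtain c d z w where e: "e = {c, d}" "c \<in> S" "d \<in> S" "c < d"
    and z: "z \<in> S" "c < z" "z < d" and w: "w \<in> S" "w < c \<or> d < w"
    using assms(3) unfolding polygon_diagonal_def by blast
  have "c \<noteq> v" "d \<noteq> v"
    using assms(4) e(1) by auto
  have "2 \<le> card S"
    using card_ge_4_if_polygon_diagonal[OF assms(1,3)] by simp
  then have "(\<exists>z'\<in>S - {v}. c < z' \<and> z' < d) \<and> (\<exists>w'\<in>S - {v}. w' < c \<or> d < w')"
  proof (cases rule: polygon_ear_cases[OF assms(1,2) \<open>2 \<le> card S\<close>, case_names inner outer])
    case (inner a b)
    have "c \<le> a \<or> b \<le> c" "d \<le> a \<or> b \<le> d"
      using inner(6) e(2,3) \<open>c \<noteq> v\<close> \<open>d \<noteq> v\<close> by auto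
    moreover have "\<not> (c = a \<and> d = b)"
      using assms(5) e(1) inner(1) by auto
    ultimately have "(\<exists>z'\<in>{z, a, b}. z' \<noteq> v \<and> c < z' \<and> z' < d) \<and>
        (\<exists>w'\<in>{w, a, b}. w' \<noteq> v \<and> (w' < c \<or> d < w'))"
      using inner(4,5) z(2,3) w(2) e(4) by auto
    then show ?thesis
      using z(1) w(1) inner(2,3) by blast
  next
    case (outer a b)
    have "a \<le> c \<and> c \<le> b" "a \<le> d \<and> d \<le> b"
      using outer(5) e(2,3) \<open>c \<noteq> v\<close> \<open>d \<noteq> v\<close> by auto
    moreover have "\<not> (c = a \<and> d = b)"
      using assms(5) e(1) outer(1) by auto
    ultimately have "(\<exists>z'\<in>{z, a, b}. z' \<noteq> v \<and> c < z' \<and> z' < d) \<and>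
        (\<exists>w'\<in>{w, a, b}. w' \<noteq> v \<and> (w' < c \<or> d < w'))"
      using outer(4) z(2,3) w(2) e(4) by auto
    then show ?thesis
      using z(1) w(1) outer(2,3) by blast
  qed
  then show ?thesis
    unfolding polygon_diagonal_def using e \<open>c \<noteq> v\<close> \<open>d \<noteq> v\<close> by blast
qed

lemma polygon_triangulation_insert_ear:
  assumes "finite S" "v \<in> S" "4 \<le> card S" "polygon_triangulation (S - {v}) T"
  shows "polygon_triangulation S (insert (polygon_ear S v) T)"
proof -
  have diag: "polygon_diagonal (S - {v}) t" if "t \<in> T" for t
    using assms(4) that unfolding polygon_triangulation_def by blast
  have ear_not_crosses: "\<not> crosses (polygon_ear S v) t" if t: "t \<in> T" for t
  proof -
    obtain c d where "t = {c, d}" "c \<in> S - {v}" "d \<in> S - {v}"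
      using diag[OF t] unfolding polygon_diagonal_def by blast
    then show ?thesis
      using polygon_ear_not_crosses[OF assms(1,2)] assms(3) by simp
  qed
  show ?thesis
    unfolding polygon_triangulation_def
  proof (intro conjI ballI allI impI)
    fix e assume "e \<in> insert (polygon_ear S v) T"
    then show "polygon_diagonal S e"
      using polygon_diagonal_ear[OF assms(1-3)] diag polygon_diagonal_mono by blast
  next
    fix e f assume "e \<in> insert (polygon_ear S v) T" "f \<in> insert (polygon_ear S v) T"
    then show "\<not> crosses e f"
      using assms(4) ear_not_crosses not_crosses_self crosses_commute
      unfolding polygon_triangulation_def by blast
  next
    fix f assume f: "polygon_diagonal S f \<and> f \<notin> insert (polygon_ear S v) T"
    show "\<exists>g\<in>insert (polygon_ear S v) T. crosses f g"
    proof (cases "v \<in> f")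
      case True
      then show ?thesis
        using polygon_diagonal_at_vertex_crosses_ear[OF assms(1,2)] f by blast
    next
      case False
      then have "polygon_diagonal (S - {v}) f"
        using polygon_diagonal_delete_vertex[OF assms(1,2)] f by blast
      then show ?thesis
        using assms(4) f unfolding polygon_triangulation_def by blast
    qed
  qed
qed

lemma next_vertex_in:
  assumes "finite S" "v \<in> S"
  shows "next_vertex S v \<in> S"
proof (cases "\<exists>x\<in>S. v < x")
  case True
  then show ?thesis using next_vertex_greater[OF assms(1)] by blast
next
  case False
  then show ?thesis using next_vertex_wrap[OF assms] by (simp add: not_less)
qed

lemma next_vertex_closed_eq:
  assumes "finite S" "U \<subseteq> S" "U \<noteq> {}" "\<And>u. u \<in> U \<Longrightarrow> next_vertex S u \<in> U"
  shows "U = S"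
proof (rule ccontr)
  assume "U \<noteq> S"
  then obtain w where w: "w \<in> S" "w \<notin> U"
    using assms(2) by blast
  have finU: "finite U"
    using assms(1,2) finite_subset by blast
  have above: "w < u" if u: "u \<in> U" for u
  proof (rule ccontr)
    assume "\<not> w < u"
    with u w(2) have "u < w"
      by (metis linorder_neqE_nat)
    define L where "L = {u\<in>U. u < w}"
    have L: "finite L" "L \<noteq> {}"
      using finU u \<open>u < w\<close> unfolding L_def by auto
    define m where "m = Max L"
    have m: "m \<in> U" "m < w"
      using Max_in[OF L] unfolding m_def L_def by auto
    have n: "next_vertex S m \<le> w" "m < next_vertex S m" "next_vertex S m \<in> U"
      using next_vertex_greater[OF assms(1) w(1) m(2)] assms(4)[OF m(1)] by auto
    then have "next_vertex S m \<in> L"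
      using w(2) unfolding L_def by (auto simp: le_less)
    then have "next_vertex S m \<le> m"
      unfolding m_def using Max_ge[OF L(1)] by blast
    with n(2) show False by simp
  qed
  define m where "m = Max U"
  have m: "m \<in> U" "\<And>u. u \<in> U \<Longrightarrow> u \<le> m"
    unfolding m_def using Max_in[OF finU assms(3)] Max_ge[OF finU] by blast+
  show False
  proof (cases "\<exists>x\<in>S. m < x")
    case True
    then have "m < next_vertex S m"
      using next_vertex_greater[OF assms(1)] by blast
    then show False
      using m(2)[OF assms(4)[OF m(1)]] by simp
  next
    case False
    then have "next_vertex S m \<le> w"
      using next_vertex_wrap[OF assms(1) w(1)] by (simp add: not_less)
    then show False
      using above[OF assms(4)[OF m(1)]] by simp
  qed
qed

lemma inj_on_polygon_ear:
  assumes "finite S"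
  shows "inj_on (polygon_ear S) (S - {Min S, Max S})"
proof (rule inj_onI)
  have interior: "prev_vertex S x < next_vertex S x" "x < next_vertex S x"
    "\<And>y. y \<in> S \<Longrightarrow> x < y \<Longrightarrow> next_vertex S x \<le> y"
    if x: "x \<in> S - {Min S, Max S}" for x
  proof -
    have "Min S \<le> x" "x \<le> Max S"
      using x Min_le[OF assms] Max_ge[OF assms] by auto
    then have "Min S < x" "x < Max S"
      using x by auto
    moreover have "Min S \<in> S" "Max S \<in> S"
      using x Min_in[OF assms] Max_in[OF assms] by auto
    ultimately have "prev_vertex S x < x" "x < next_vertex S x"
      using prev_vertex_less[OF assms] next_vertex_greater[OF assms] by blast+
    then show "prev_vertex S x < next_vertex S x" "x < next_vertex S x"
      by simp_all
    show "\<And>y. y \<in> S \<Longrightarrow> x < y \<Longrightarrow> next_vertex S x \<le> y"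
      using next_vertex_greater[OF assms] by blast
  qed
  fix v w assume v: "v \<in> S - {Min S, Max S}" and w: "w \<in> S - {Min S, Max S}"
    and eq: "polygon_ear S v = polygon_ear S w"
  have "next_vertex S v = next_vertex S w"
    using eq interior(1)[OF v] interior(1)[OF w] unfolding polygon_ear_def doubleton_eq_iff
    by auto
  then show "v = w"
    using interior(2,3)[OF v] interior(2,3)[OF w] v w
    by (metis DiffD1 leD linorder_neqE_nat)
qed

lemma card_polygon_ears:
  assumes "finite S"
  shows "card S - 2 \<le> card (polygon_ear S ` S)"
proof -
  have "card {Min S, Max S} \<le> 2"
    by (intro card_insert_le_m1) auto
  then have "card S - 2 \<le> card (S - {Min S, Max S})"
    using diff_card_le_card_Diff[of "{Min S, Max S}" S] by simp
  also have "\<dots> = card (polygon_ear S ` (S - {Min S, Max S}))"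
    using card_image[OF inj_on_polygon_ear[OF assms]] by simp
  also have "\<dots> \<le> card (polygon_ear S ` S)"
    using assms by (intro card_mono) auto
  finally show ?thesis .
qed

lemma ex_endpoint_ear_notin:
  assumes "finite S" "finite B" "\<forall>e\<in>B. polygon_diagonal S e" "B \<noteq> {}" "card B + 3 \<le> card S"
  shows "\<exists>v\<in>S. polygon_ear S v \<notin> B \<and> (\<exists>e\<in>B. v \<in> e)"
proof (rule ccontr)
  assume "\<not> ?thesis"
  then have ears_in: "polygon_ear S v \<in> B" if "v \<in> S" "\<exists>e\<in>B. v \<in> e" for v
    using that by blast
  define U where "U = {v\<in>S. \<exists>e\<in>B. v \<in> e}"
  have "U = S"
  proof (rule next_vertex_closed_eq[OF assms(1)])
    show "U \<subseteq> S"
      unfolding U_def by blast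
    obtain e where "e \<in> B"
      using assms(4) by blast
    then obtain a b where "e = {a, b}" "a \<in> S"
      using assms(3) unfolding polygon_diagonal_def by blast
    then show "U \<noteq> {}"
      unfolding U_def using \<open>e \<in> B\<close> by blast
    show "next_vertex S u \<in> U" if "u \<in> U" for u
      using that ears_in next_vertex_in[OF assms(1)] unfolding U_def polygon_ear_def by blast
  qed
  then have "polygon_ear S ` S \<subseteq> B"
    using ears_in unfolding U_def by blast
  then have "card S - 2 \<le> card B"
    using card_polygon_ears[OF assms(1)] card_mono[OF assms(2)] by (meson order_trans)
  then show False
    using assms(5) by linarith
qed

lemma card_ge_4_if_polygon_blocker:
  assumes "finite S" "polygon_blocker S B"
  shows "4 \<le> card S"
proof (rule ccontr)
  assume "\<not> 4 \<le> card S"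
  then have "polygon_triangulation S {}"
    using card_ge_4_if_polygon_diagonal[OF assms(1)] unfolding polygon_triangulation_def by auto
  then show False
    using assms(2) unfolding polygon_blocker_def by blast
qed

lemma polygon_blocker_delete_vertex:
  assumes "finite S" "v \<in> S" "polygon_blocker S B" "polygon_ear S v \<notin> B"
  shows "polygon_blocker (S - {v}) {e\<in>B. v \<notin> e}"
  unfolding polygon_blocker_def
proof (intro conjI ballI allI impI)
  fix e assume "e \<in> {e\<in>B. v \<notin> e}"
  then show "polygon_diagonal (S - {v}) e"
    using assms(3,4) polygon_diagonal_delete_vertex[OF assms(1,2)]
    unfolding polygon_blocker_def by fastforce
next
  fix T assume T: "polygon_triangulation (S - {v}) T"
  have "polygon_triangulation S (insert (polygon_ear S v) T)"
    using polygon_triangulation_insert_ear[OF assms(1,2) _ T]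
      card_ge_4_if_polygon_blocker[OF assms(1,3)] by blast
  then obtain e where "e \<in> B" "e \<in> insert (polygon_ear S v) T"
    using assms(3) unfolding polygon_blocker_def by blast
  moreover have "v \<notin> t" if "t \<in> T" for t
    using T that polygon_diagonal_subset unfolding polygon_triangulation_def by blast
  ultimately show "{e\<in>B. v \<notin> e} \<inter> T \<noteq> {}"
    using assms(4) by blast
qed

lemma polygon_blocker_card_lower_bound:
  assumes "finite S" "finite B" "polygon_blocker S B"
  shows "card S \<le> card B + 2"
  using assms
proof (induction "card S" arbitrary: S B rule: less_induct)
  case less
  show ?case
  proof (rule ccontr)
    assume small: "\<not> card S \<le> card B + 2"
    have "4 \<le> card S"
      using card_ge_4_if_polygon_blocker less.prems(1,3) .
    have diag: "\<forall>e\<in>B. polygon_diagonal S e"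
      using less.prems(3) unfolding polygon_blocker_def by blast
    have "\<exists>v\<in>S. polygon_ear S v \<notin> B \<and> (B = {} \<or> (\<exists>e\<in>B. v \<in> e))"
    proof (cases "B = {}")
      case True
      then show ?thesis
        using \<open>4 \<le> card S\<close> by (metis card.empty empty_iff equals0I not_numeral_le_zero)
    next
      case False
      then show ?thesis
        using ex_endpoint_ear_notin[OF less.prems(1,2) diag False] small by simp
    qed
    then obtain v where v: "v \<in> S" "polygon_ear S v \<notin> B" "B = {} \<or> (\<exists>e\<in>B. v \<in> e)"
      by blast
    let ?B = "{e\<in>B. v \<notin> e}"
    have "card (S - {v}) \<le> card ?B + 2"
      using less.hyps[OF card_Diff1_less[OF less.prems(1) v(1)] _ _
          polygon_blocker_delete_vertex[OF less.prems(1) v(1) less.prems(3) v(2)]]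
        less.prems(1,2) by simp
    moreover have "card ?B < card B" if "B \<noteq> {}"
    proof -
      have "?B \<subset> B"
        using v(3) that by blast
      then show ?thesis
        using psubset_card_mono less.prems(2) by blast
    qed
    ultimately show False
      using small \<open>4 \<le> card S\<close> card_Diff_singleton[OF v(1)] by (cases "B = {}") auto
  qed
qed

lemma not_adjacent_mod_iff:
  fixes a b n :: nat
  assumes "a < b" "b < n"
  shows "b \<noteq> (a + 1) mod n \<and> a \<noteq> (b + 1) mod n \<longleftrightarrow>
    (\<exists>c<n. a < c \<and> c < b) \<and> (\<exists>c<n. c < a \<or> b < c)"
proof -
  have "(a + 1) mod n = a + 1"
    using assms by simp
  moreover have "(b + 1) mod n = (if b + 1 = n then 0 else b + 1)"
    using assms(2) by auto
  moreover have "(\<exists>c<n. a < c \<and> c < b) \<longleftrightarrow> a + 1 < b"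
    using assms by (auto intro!: exI[of _ "a + 1"])
  moreover have "(\<exists>c<n. c < a \<or> b < c) \<longleftrightarrow> 0 < a \<or> b + 1 < n"
    using assms by (auto intro: exI[of _ 0] exI[of _ "n - 1"])
  ultimately show ?thesis
    using assms by auto
qed

lemma diagonal_iff_polygon_diagonal: "diagonal n e \<longleftrightarrow> polygon_diagonal {0..<n} e"
proof -
  have ordered: "diagonal n {a, b} \<longleftrightarrow> polygon_diagonal {0..<n} {a, b}" if "a < b" for a b
  proof (cases "b < n")
    case True
    have "diagonal n {a, b} \<longleftrightarrow> b \<noteq> (a + 1) mod n \<and> a \<noteq> (b + 1) mod n"
    proof
      show "diagonal n {a, b} \<Longrightarrow> b \<noteq> (a + 1) mod n \<and> a \<noteq> (b + 1) mod n"
        unfolding diagonal_def doubleton_eq_iff by auto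
      show "b \<noteq> (a + 1) mod n \<and> a \<noteq> (b + 1) mod n \<Longrightarrow> diagonal n {a, b}"
        unfolding diagonal_def using that True less_imp_neq[OF that] by fastforce
    qed
    moreover have "polygon_diagonal {0..<n} {a, b} \<longleftrightarrow>
        (\<exists>c\<in>{0..<n}. a < c \<and> c < b) \<and> (\<exists>c\<in>{0..<n}. c < a \<or> b < c)"
    proof
      show "polygon_diagonal {0..<n} {a, b} \<Longrightarrow>
          (\<exists>c\<in>{0..<n}. a < c \<and> c < b) \<and> (\<exists>c\<in>{0..<n}. c < a \<or> b < c)"
        using polygon_diagonal_lessD[OF _ that] by blast
      show "(\<exists>c\<in>{0..<n}. a < c \<and> c < b) \<and> (\<exists>c\<in>{0..<n}. c < a \<or> b < c) \<Longrightarrow>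
          polygon_diagonal {0..<n} {a, b}"
        unfolding polygon_diagonal_def using that True by (intro exI[of _ a] exI[of _ b]) auto
    qed
    ultimately show ?thesis
      using not_adjacent_mod_iff[OF that True] by (simp add: Bex_def)
  next
    case False
    then show ?thesis
      unfolding diagonal_def polygon_diagonal_def doubleton_eq_iff using that by auto
  qed
  show ?thesis
  proof (cases "\<exists>a b. e = {a, b} \<and> a < b")
    case True
    then show ?thesis
      using ordered by blast
  next
    case False
    then have "\<not> diagonal n e" "\<not> polygon_diagonal {0..<n} e"
      unfolding diagonal_def polygon_diagonal_def by (metis insert_commute linorder_neqE_nat)+
    then show ?thesis
      by simp
  qed
qed

lemma blocker_iff_polygon_blocker: "blocker n B \<longleftrightarrow> polygon_blocker {0..<n} B"
  unfolding blocker_def polygon_blocker_def triangulation_def polygon_triangulation_def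
    diagonal_iff_polygon_diagonal ..

lemma ear_cover_eq_polygon_ear:
  assumes "i < n"
  shows "ear_cover n i = polygon_ear {0..<n} i"
proof -
  have "prev_vertex {0..<n} i = (i + n - 1) mod n"
  proof (cases "i = 0")
    case True
    then show ?thesis
      using prev_vertex_wrap[of "{0..<n}" "n - 1" i] assms by simp linarith
  next
    case False
    then have "prev_vertex {0..<n} i = i - 1"
      using prev_vertex_less[of "{0..<n}" "i - 1" i] assms by fastforce
    moreover have "(i + n - 1) mod n = i - 1"
      using False assms by (simp add: mod_if)
    ultimately show ?thesis by simp
  qed
  moreover have "next_vertex {0..<n} i = (i + 1) mod n"
  proof (cases "i + 1 = n")
    case True
    then show ?thesis
      using next_vertex_wrap[of "{0..<n}" 0 i] assms by simp
  next
    case False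
    then show ?thesis
      using next_vertex_greater[of "{0..<n}" "i + 1" i] assms by fastforce
  qed
  ultimately show ?thesis
    unfolding ear_cover_def polygon_ear_def by simp
qed

theorem mainTheorem11:
  fixes n i :: nat and B :: "nat set set"
  assumes "n \<ge> 3"
    and "nk_blocker n (n - 1) B"
    and "i < n"
    and "ear_cover n i \<notin> B"
  shows "deg B i \<le> 2"
proof -
  have blocker: "polygon_blocker {0..<n} B" and "finite B" "card B = n - 1"
    using assms(2) blocker_iff_polygon_blocker
    unfolding nk_blocker_def saturated_blocker_def by auto
  let ?B = "{e\<in>B. i \<notin> e}"
  have "polygon_blocker ({0..<n} - {i}) ?B"
    using polygon_blocker_delete_vertex[OF _ _ blocker] assms(3,4) ear_cover_eq_polygon_ear by simp
  then have "n - 1 \<le> card ?B + 2"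
    using polygon_blocker_card_lower_bound[of "{0..<n} - {i}" ?B] \<open>finite B\<close> assms(3) by simp
  moreover have "card B = card ?B + deg B i"
    using card_Int_Diff[OF \<open>finite B\<close>, of "{e. i \<in> e}"]
    unfolding deg_def by (simp add: Int_def set_diff_eq)
  ultimately show ?thesis
    using \<open>card B = n - 1\<close> by linarith
qed

end
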